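(* Let $g \in L^2(\mathbb{R}^d,\mathbb{R})$ be a real-valued window function and suppose that $\mathcal{L} \subseteq \mathbb{R}^{2d}$ satisfies one of the following two conditions: (1) $\mathcal{L} = \Lambda \times \mathbb{R}^d$ with $\Lambda$ a lattice in $\mathbb{R}^d$; (2) $\mathcal{L}$ is a separable lattice, i.e. $\mathcal{L}=\mathcal{A}\times\mathcal{B}$ with $\mathcal{A},\mathcal{B}$ lattices in $\mathbb{R}^d$. Then there exist two real-valued functions $f_1,f_2 \in L^2(\mathbb{R}^d,\mathbb{R})$ such that $|V_g f_1(z)| = |V_g f_2(z)|$ for all $z \in \mathcal{L}$ and $f_1\neq f_2$, $f_1\neq -f_2$ (equivalently, there is no $\nu\in\mathbb{C}$ with $|\nu|=1$ and $f_1=\nu f_2$).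
   Context: $V_gf(x,\omega)=\int_{\mathbb{R}^d} f(t)\overline{g(t-x)}e^{-2\pi i \omega\cdot t}\,dt$ is the short-time Fourier transform. A lattice in $\mathbb{R}^d$ is $A\mathbb{Z}^d$ with $A\in\mathrm{GL}_d(\mathbb{R})$. $L^2(\mathbb{R}^d,\mathbb{R})$ denotes the real-valued functions in $L^2(\mathbb{R}^d)$. *)

theory Defs
  imports "HOL-Analysis.Analysis"
begin

definition L2R :: "(real^'n \<Rightarrow> real) set" where
  "L2R = {f. f \<in> borel_measurable lebesgue \<and> integrable lebesgue (\<lambda>t. (f t)\<^sup>2)}"

definition stft :: "(real^'n \<Rightarrow> real) \<Rightarrow> (real^'n \<Rightarrow> real) \<Rightarrow> real^'n \<Rightarrow> real^'n \<Rightarrow> complex" where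
  "stft g f x \<omega> = (LINT t|lebesgue. complex_of_real (f t * g (t - x)) * cis (- 2 * pi * (\<omega> \<bullet> t)))"

definition is_lattice :: "(real^'n) set \<Rightarrow> bool" where
  "is_lattice L \<longleftrightarrow> (\<exists>A :: real^'n^'n. invertible A \<and>
      L = {A *v (\<chi> i. real_of_int (k $ i)) | k :: int^'n. True})"

end

theory Submission
  imports Defs
begin

text \<open>
  Choose \<open>\<gamma> \<noteq> 0\<close> with \<open>\<gamma> \<bullet> x \<in> \<int>\<close> for all \<open>x\<close> in the lattice \<open>\<Lambda>\<close> and let
  \<open>\<sigma> t = sin (2 * pi * (\<gamma> \<bullet> t))\<close>, so that \<open>\<sigma> (x - s) = - \<sigma> s\<close> for \<open>x \<in> \<Lambda>\<close>.
  For \<open>f\<^sub>\<plusminus> t = g (- t) * (1 \<plusminus> \<sigma> t)\<close> the substitution \<open>t = x - s\<close> shows that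
  \<open>V\<^sub>g f\<^sub>+ (x, \<omega>)\<close> is a unimodular multiple of the complex conjugate of \<open>V\<^sub>g f\<^sub>- (x, \<omega>)\<close>,
  so the moduli agree on \<open>\<Lambda> \<times> UNIV\<close>, which contains both kinds of sampling sets.
  As \<open>\<sigma>\<close> vanishes only on countably many hyperplanes, \<open>f\<^sub>+ - f\<^sub>- = 2 g (- t) \<sigma> t\<close> and
  \<open>f\<^sub>+ + f\<^sub>- = 2 g (- t)\<close> are not null unless \<open>g\<close> is; and for a null window every
  STFT vanishes.
\<close>

lemma borel_measurable_lebesgue_continuous:
  fixes f :: "'a::euclidean_space \<Rightarrow> 'b::euclidean_space"
  shows "continuous_on UNIV f \<Longrightarrow> f \<in> borel_measurable lebesgue"
  using continuous_imp_measurable_on_sets_lebesgue[of UNIV f] by simp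

lemma
  fixes c :: "'a::euclidean_space"
  assumes "\<bar>m\<bar> = 1"
  shows lebesgue_affine_unit_measurable: "(\<lambda>x. c + m *\<^sub>R x) \<in> lebesgue \<rightarrow>\<^sub>M lebesgue"
    and distr_lebesgue_affine_unit: "distr lebesgue lebesgue (\<lambda>x. c + m *\<^sub>R x) = lebesgue"
proof -
  have eq: "(\<lambda>x. c + (\<Sum>j\<in>Basis. (m * (x \<bullet> j)) *\<^sub>R j)) = (\<lambda>x. c + m *\<^sub>R x)"
    unfolding scaleR_scaleR[symmetric] scaleR_sum_right[symmetric] euclidean_representation by simp
  have "m \<noteq> 0" using assms by auto
  then show "(\<lambda>x. c + m *\<^sub>R x) \<in> lebesgue \<rightarrow>\<^sub>M lebesgue"
    using lebesgue_affine_measurable[of "\<lambda>_. m" c] eq by simp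
  have "lebesgue = density (distr lebesgue lebesgue (\<lambda>x. c + m *\<^sub>R x)) (\<lambda>_. 1)"
    using lebesgue_affine_euclidean[of "\<lambda>_. m" c] \<open>m \<noteq> 0\<close> eq assms by simp
  then show "distr lebesgue lebesgue (\<lambda>x. c + m *\<^sub>R x) = lebesgue"
    by (metis density_1)
qed

lemma integral_lebesgue_affine_unit:
  fixes f :: "'a::euclidean_space \<Rightarrow> 'b::{banach, second_countable_topology}"
  assumes "\<bar>m\<bar> = 1" and "f \<in> borel_measurable lebesgue"
  shows "integral\<^sup>L lebesgue f = (LINT x|lebesgue. f (c + m *\<^sub>R x))"
  using integral_distr[OF lebesgue_affine_unit_measurable[OF assms(1)] assms(2)]
  by (simp add: distr_lebesgue_affine_unit[OF assms(1)])

lemma integrable_lebesgue_affine_unit_iff: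
  fixes f :: "'a::euclidean_space \<Rightarrow> 'b::{banach, second_countable_topology}"
  assumes "\<bar>m\<bar> = 1" and "f \<in> borel_measurable lebesgue"
  shows "integrable lebesgue (\<lambda>x. f (c + m *\<^sub>R x)) \<longleftrightarrow> integrable lebesgue f"
  using integrable_distr_eq[OF lebesgue_affine_unit_measurable[OF assms(1)] assms(2)]
  by (simp add: distr_lebesgue_affine_unit[OF assms(1)])

lemma AE_lebesgue_affine_unit:
  fixes c :: "'a::euclidean_space"
  assumes "\<bar>m\<bar> = 1" and "AE x in lebesgue. P x" and "{x. P x} \<in> sets lebesgue"
  shows "AE x in lebesgue. P (c + m *\<^sub>R x)"
proof -
  have "AE x in distr lebesgue lebesgue (\<lambda>x. c + m *\<^sub>R x). P x"
    using assms(2) by (simp only: distr_lebesgue_affine_unit[OF assms(1)])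
  then show ?thesis
    using assms(3) by (subst (asm) AE_distr_iff[OF lebesgue_affine_unit_measurable[OF assms(1)]]) auto
qed

lemma L2R_reflect:
  assumes "g \<in> L2R"
  shows "(\<lambda>t. g (- t)) \<in> L2R"
proof -
  have [measurable]: "g \<in> borel_measurable lebesgue" and "integrable lebesgue (\<lambda>t. (g t)\<^sup>2)"
    using assms by (auto simp: L2R_def)
  moreover have "(\<lambda>t. (g t)\<^sup>2) \<in> borel_measurable lebesgue" by measurable
  ultimately show ?thesis
    using borel_measurable_affine[of g "-1" 0]
      integrable_lebesgue_affine_unit_iff[of "-1" "\<lambda>t. (g t)\<^sup>2" 0]
    by (simp add: L2R_def)
qed

lemma L2R_mult_bounded:
  assumes "f \<in> L2R" and [measurable]: "h \<in> borel_measurable lebesgue" and "\<And>t. \<bar>h t\<bar> \<le> C"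
  shows "(\<lambda>t. f t * h t) \<in> L2R"
proof -
  have [measurable]: "f \<in> borel_measurable lebesgue" and "integrable lebesgue (\<lambda>t. (f t)\<^sup>2)"
    using assms(1) by (auto simp: L2R_def)
  then have "integrable lebesgue (\<lambda>t. C\<^sup>2 * (f t)\<^sup>2)" by simp
  then have "integrable lebesgue (\<lambda>t. (f t * h t)\<^sup>2)"
  proof (rule Bochner_Integration.integrable_bound)
    show "(\<lambda>t. (f t * h t)\<^sup>2) \<in> borel_measurable lebesgue" by measurable
    have "(h t)\<^sup>2 \<le> C\<^sup>2" for t
      using assms(3)[of t] by (metis abs_ge_self abs_le_square_iff order.trans)
    then have "(f t)\<^sup>2 * (h t)\<^sup>2 \<le> (f t)\<^sup>2 * C\<^sup>2" for t
      by (simp add: mult_left_mono)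
    then show "AE t in lebesgue. norm ((f t * h t)\<^sup>2) \<le> norm (C\<^sup>2 * (f t)\<^sup>2)"
      by (simp add: power_mult_distrib mult.commute)
  qed
  then show ?thesis by (simp add: L2R_def)
qed

lemma lattice_dual_vector:
  assumes "is_lattice \<Lambda>"
  obtains \<gamma> :: "real^'n" where "\<gamma> \<noteq> 0" and "\<And>x. x \<in> \<Lambda> \<Longrightarrow> \<gamma> \<bullet> x \<in> \<int>"
proof -
  obtain A :: "real^'n^'n" where "invertible A"
    and \<Lambda>: "\<Lambda> = {A *v (\<chi> i. real_of_int (k $ i)) | k :: int^'n. True}"
    using assms by (auto simp: is_lattice_def)
  then obtain A' :: "real^'n^'n" where A': "A' ** A = mat 1"
    by (auto simp: invertible_def)
  fix i :: 'n
  define \<gamma> where "\<gamma> = axis i 1 v* A'"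
  have coord: "\<gamma> \<bullet> (A *v v) = v $ i" for v
  proof -
    have "\<gamma> \<bullet> (A *v v) = axis i 1 \<bullet> (A' *v (A *v v))"
      unfolding \<gamma>_def by (rule dot_lmul_matrix)
    also have "\<dots> = v $ i"
      by (simp add: matrix_vector_mul_assoc A' cart_eq_inner_axis inner_commute)
    finally show ?thesis .
  qed
  have "\<gamma> \<noteq> 0"
    using coord[of "axis i 1"] by auto
  moreover have "\<gamma> \<bullet> x \<in> \<int>" if "x \<in> \<Lambda>" for x
    using that coord unfolding \<Lambda> by auto
  ultimately show ?thesis by (rule that)
qed

lemma AE_sin_inner_nonzero:
  fixes \<gamma> :: "'a::euclidean_space"
  assumes "\<gamma> \<noteq> 0"
  shows "AE t in lebesgue. sin (2 * pi * (\<gamma> \<bullet> t)) \<noteq> 0"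
proof -
  have "{t. sin (2 * pi * (\<gamma> \<bullet> t)) = 0} \<subseteq> (\<Union>i::int. {t. \<gamma> \<bullet> t = of_int i / 2})"
    by (auto simp: sin_zero_iff_int2 field_simps)
  moreover have "negligible (\<Union>i::int. {t. \<gamma> \<bullet> t = of_int i / 2})"
    using assms negligible_hyperplane[of \<gamma>] by (intro negligible_countable_Union) blast+
  ultimately have "{t. sin (2 * pi * (\<gamma> \<bullet> t)) = 0} \<in> null_sets lebesgue"
    using negligible_subset negligible_iff_null_sets by blast
  from AE_not_in[OF this] show ?thesis by simp
qed

lemma stft_null_window:
  assumes [measurable]: "g \<in> borel_measurable lebesgue" and "AE t in lebesgue. g t = 0"
  shows "stft g f x \<omega> = 0"
proof -
  have "{t \<in> space lebesgue. g t = 0} \<in> sets lebesgue" by measurable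
  then have "AE t in lebesgue. g (- x + 1 *\<^sub>R t) = 0"
    by (intro AE_lebesgue_affine_unit) (use assms in auto)
  then have "AE t in lebesgue. complex_of_real (f t * g (t - x)) * cis (- 2 * pi * (\<omega> \<bullet> t)) = 0"
    by eventually_elim simp
  then show ?thesis unfolding stft_def by (rule integral_eq_zero_AE)
qed

lemma stft_reflect_cnj:
  fixes g f1 f2 :: "real^'n \<Rightarrow> real"
  assumes [measurable]: "f1 \<in> borel_measurable lebesgue" "g \<in> borel_measurable lebesgue"
    and sym: "\<And>s. f1 (x - s) * g (- s) = f2 s * g (s - x)"
  shows "stft g f1 x \<omega> = cis (- 2 * pi * (\<omega> \<bullet> x)) * cnj (stft g f2 x \<omega>)"
proof -
  define e where "e t = cis (- 2 * pi * (\<omega> \<bullet> t))" for t :: "real^'n"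
  define F where "F t = complex_of_real (f1 t * g (t - x)) * e t" for t
  have "(\<lambda>t. g (t - x)) \<in> borel_measurable lebesgue"
    using borel_measurable_affine[of g 1 "- x"] by simp
  moreover have "e \<in> borel_measurable lebesgue"
    unfolding e_def by (intro borel_measurable_lebesgue_continuous continuous_intros)
  ultimately have "F \<in> borel_measurable lebesgue"
    unfolding F_def by measurable
  have e_diff: "e (x - s) = e x * cnj (e s)" for s
    by (simp add: e_def cis_cnj cis_mult inner_diff_right algebra_simps)
  have "stft g f1 x \<omega> = integral\<^sup>L lebesgue F"
    unfolding stft_def F_def e_def ..
  also have "\<dots> = (LINT s|lebesgue. F (x + (-1) *\<^sub>R s))"
    by (rule integral_lebesgue_affine_unit) (simp_all add: \<open>F \<in> borel_measurable lebesgue\<close>)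
  also have "\<dots> = (LINT s|lebesgue. e x * cnj (complex_of_real (f2 s * g (s - x)) * e s))"
    using sym by (simp add: F_def e_diff algebra_simps)
  also have "\<dots> = e x * cnj (stft g f2 x \<omega>)"
    unfolding stft_def integral_mult_right_zero e_def[symmetric]
    by (subst Bochner_Integration.integral_cnj) (rule refl)
  finally show ?thesis by (simp add: e_def)
qed

definition real_phase_retrieval_fails :: "(real^'n \<Rightarrow> real) \<Rightarrow> ((real^'n) \<times> (real^'n)) set \<Rightarrow> bool"
  where "real_phase_retrieval_fails g S \<longleftrightarrow> (\<exists>f1 f2. f1 \<in> L2R \<and> f2 \<in> L2R \<and>
           (\<forall>(x, \<omega>) \<in> S. cmod (stft g f1 x \<omega>) = cmod (stft g f2 x \<omega>)) \<and>
           \<not> (AE t in lebesgue. f1 t = f2 t) \<and> \<not> (AE t in lebesgue. f1 t = - f2 t))"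

lemma real_phase_retrieval_fails_subset:
  "real_phase_retrieval_fails g T \<Longrightarrow> S \<subseteq> T \<Longrightarrow> real_phase_retrieval_fails g S"
  unfolding real_phase_retrieval_fails_def by blast

lemma real_phase_retrieval_fails_null_window:
  fixes g :: "real^'n \<Rightarrow> real"
  assumes "g \<in> L2R" and "AE t in lebesgue. g t = 0"
  shows "real_phase_retrieval_fails g S"
proof -
  define B where "B = cbox (0::real^'n) One"
  have [measurable]: "B \<in> sets lebesgue" and "emeasure lebesgue B < \<infinity>"
    using lmeasurable_cbox[of 0 One] unfolding B_def fmeasurable_def by auto
  moreover have "(\<lambda>t. (indicator B t)\<^sup>2) = (indicator B :: _ \<Rightarrow> real)"
    by (simp add: fun_eq_iff indicator_def)
  ultimately have "indicator B \<in> L2R"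
    by (simp add: L2R_def)
  moreover have "(\<lambda>_. 0) \<in> L2R"
    by (simp add: L2R_def)
  moreover have "\<not> (AE t in lebesgue. indicator B t = (0::real))"
  proof
    assume "AE t in lebesgue. indicator B t = (0::real)"
    then have "AE t in lebesgue. t \<notin> B"
      by eventually_elim (simp add: indicator_def)
    then have "B \<in> null_sets lebesgue"
      using AE_iff_null_sets[OF \<open>B \<in> sets lebesgue\<close>] by simp
    then show False
      unfolding negligible_iff_null_sets[symmetric] B_def negligible_interval
      by (simp add: box_ne_empty)
  qed
  moreover have "stft g f x \<omega> = 0" for f x \<omega>
    using assms by (intro stft_null_window) (auto simp: L2R_def)
  ultimately show ?thesis
    unfolding real_phase_retrieval_fails_def
    by (intro exI[of _ "indicator B"] exI[of _ "\<lambda>_. 0"]) simp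
qed

lemma lattice_odd_function:
  fixes \<Lambda> :: "(real^'n) set"
  assumes "is_lattice \<Lambda>"
  obtains \<sigma> :: "real^'n \<Rightarrow> real"
  where "\<sigma> \<in> borel_measurable lebesgue" and "\<And>t. \<bar>\<sigma> t\<bar> \<le> 1"
    and "\<And>x s. x \<in> \<Lambda> \<Longrightarrow> \<sigma> (x - s) = - \<sigma> s" and "AE t in lebesgue. \<sigma> t \<noteq> 0"
proof -
  obtain \<gamma> :: "real^'n" where "\<gamma> \<noteq> 0" and \<gamma>: "\<And>x. x \<in> \<Lambda> \<Longrightarrow> \<gamma> \<bullet> x \<in> \<int>"
    using lattice_dual_vector[OF assms] by blast
  define \<sigma> where "\<sigma> t = sin (2 * pi * (\<gamma> \<bullet> t))" for t
  have "\<sigma> \<in> borel_measurable lebesgue"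
    unfolding \<sigma>_def by (intro borel_measurable_lebesgue_continuous continuous_intros)
  moreover have "\<sigma> (x - s) = - \<sigma> s" if x: "x \<in> \<Lambda>" for x s
  proof -
    obtain n :: int where "\<gamma> \<bullet> x = of_int n"
      using \<gamma>[OF x] by (elim Ints_cases)
    then show ?thesis
      by (simp add: \<sigma>_def inner_diff_right right_diff_distrib sin_diff sin_int_2pin cos_int_2pin)
  qed
  moreover have "AE t in lebesgue. \<sigma> t \<noteq> 0"
    unfolding \<sigma>_def using AE_sin_inner_nonzero[OF \<open>\<gamma> \<noteq> 0\<close>] .
  ultimately show ?thesis
    using that[of \<sigma>] by (simp add: \<sigma>_def)
qed

lemma AE_zero_reflect:
  assumes [measurable]: "g \<in> borel_measurable lebesgue" and "AE t in lebesgue. g (- t) = (0::real)"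
  shows "AE t in lebesgue. g t = 0"
proof -
  have [measurable]: "(\<lambda>t. g (- t)) \<in> borel_measurable lebesgue"
    using borel_measurable_affine[of g "-1" 0] by simp
  have "{t \<in> space lebesgue. g (- t) = 0} \<in> sets lebesgue" by measurable
  then have "AE t in lebesgue. g (- (0 + (-1) *\<^sub>R t)) = 0"
    by (intro AE_lebesgue_affine_unit) (use assms in auto)
  then show ?thesis by simp
qed

lemma real_phase_retrieval_fails_lattice:
  fixes \<Lambda> :: "(real^'n) set"
  assumes g: "g \<in> L2R" and "is_lattice \<Lambda>" and nonnull: "\<not> (AE t in lebesgue. g t = 0)"
  shows "real_phase_retrieval_fails g (\<Lambda> \<times> UNIV)"
proof -
  have [measurable]: "g \<in> borel_measurable lebesgue"
    using g by (simp add: L2R_def)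
  obtain \<sigma> :: "real^'n \<Rightarrow> real" where [measurable]: "\<sigma> \<in> borel_measurable lebesgue" and "\<And>t. \<bar>\<sigma> t\<bar> \<le> 1"
    and \<sigma>_odd: "\<And>x s. x \<in> \<Lambda> \<Longrightarrow> \<sigma> (x - s) = - \<sigma> s" and "AE t in lebesgue. \<sigma> t \<noteq> 0"
    using lattice_odd_function[OF \<open>is_lattice \<Lambda>\<close>] by blast
  define f where "f e t = g (- t) * (1 + e * \<sigma> t)" for e t
  have bounded: "\<bar>1 + e * \<sigma> t\<bar> \<le> 2" if "\<bar>e\<bar> = 1" for e t
    using that \<open>\<bar>\<sigma> t\<bar> \<le> 1\<close> abs_triangle_ineq[of 1 "e * \<sigma> t"] by (simp add: abs_mult)
  have f_L2R: "f e \<in> L2R" if "\<bar>e\<bar> = 1" for e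
    unfolding f_def by (rule L2R_mult_bounded[OF L2R_reflect[OF g] _ bounded[OF that]]) measurable
  have g_reflect_nonnull: "\<not> (AE t in lebesgue. g (- t) = 0)"
    using AE_zero_reflect[OF \<open>g \<in> borel_measurable lebesgue\<close>] nonnull by blast
  have "\<not> (AE t in lebesgue. f 1 t = f (-1) t)"
  proof
    assume "AE t in lebesgue. f 1 t = f (-1) t"
    with \<open>AE t in lebesgue. \<sigma> t \<noteq> 0\<close> have "AE t in lebesgue. g (- t) = 0"
      by eventually_elim (simp add: f_def algebra_simps)
    with g_reflect_nonnull show False ..
  qed
  moreover have "\<not> (AE t in lebesgue. f 1 t = - f (-1) t)"
  proof
    assume "AE t in lebesgue. f 1 t = - f (-1) t"
    then have "AE t in lebesgue. g (- t) = 0"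
      by eventually_elim (simp add: f_def algebra_simps)
    with g_reflect_nonnull show False ..
  qed
  moreover have "cmod (stft g (f 1) x \<omega>) = cmod (stft g (f (-1)) x \<omega>)" if "x \<in> \<Lambda>" for x \<omega>
  proof -
    have "f 1 (x - s) * g (- s) = f (-1) s * g (s - x)" for s
      by (simp add: f_def \<sigma>_odd[OF that])
    moreover have "f 1 \<in> borel_measurable lebesgue"
      using f_L2R[of 1] by (simp add: L2R_def)
    ultimately have "stft g (f 1) x \<omega> = cis (- 2 * pi * (\<omega> \<bullet> x)) * cnj (stft g (f (-1)) x \<omega>)"
      by (intro stft_reflect_cnj) auto
    then show ?thesis by (simp add: norm_mult)
  qed
  ultimately show ?thesis
    unfolding real_phase_retrieval_fails_def using f_L2R[of 1] f_L2R[of "-1"] by auto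
qed

theorem theorem1p5:
  fixes g :: "real^'n \<Rightarrow> real" and \<L> :: "((real^'n) \<times> (real^'n)) set"
  assumes "g \<in> L2R"
    and "(\<exists>\<Lambda>. is_lattice \<Lambda> \<and> \<L> = \<Lambda> \<times> UNIV) \<or>
         (\<exists>\<A> \<B>. is_lattice \<A> \<and> is_lattice \<B> \<and> \<L> = \<A> \<times> \<B>)"
  shows "\<exists>f1 f2. f1 \<in> L2R \<and> f2 \<in> L2R \<and>
           (\<forall>(x, \<omega>) \<in> \<L>. cmod (stft g f1 x \<omega>) = cmod (stft g f2 x \<omega>)) \<and>
           \<not> (AE t in lebesgue. f1 t = f2 t) \<and>
           \<not> (AE t in lebesgue. f1 t = - f2 t)"
proof -
  obtain \<Lambda> where "is_lattice \<Lambda>" and "\<L> \<subseteq> \<Lambda> \<times> UNIV"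
    using assms(2) by blast
  have "real_phase_retrieval_fails g (\<Lambda> \<times> UNIV)"
  proof (cases "AE t in lebesgue. g t = 0")
    case True
    then show ?thesis using real_phase_retrieval_fails_null_window[OF assms(1)] by blast
  next
    case False
    then show ?thesis using real_phase_retrieval_fails_lattice[OF assms(1) \<open>is_lattice \<Lambda>\<close>] by blast
  qed
  then show ?thesis
    using real_phase_retrieval_fails_subset[OF _ \<open>\<L> \<subseteq> \<Lambda> \<times> UNIV\<close>]
    unfolding real_phase_retrieval_fails_def by blast
qed

end
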